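(* Consider a fair division instance with $n$ agents, $m$ divisible goods, additive valuations and generalized assignment constraints. For any weight vector $w\in\mathbb{R}_+^n$ with all components positive, and any feasible allocation $x=(x_1,\dots,x_n)$ maximizing $\sum_{i=1}^n w_i v_i(x_i)$ over all feasible allocations, the envy graph of $x$ is acyclic.
   Context: An allocation is $x=(x_1,\dots,x_n)$ with $x_i\in[0,1]^m$ and $\sum_i x_{i,g}\le 1$ for each good $g$. Additive valuations: $v_i(y)=\sum_g y_g v_{i,g}$, $v_{i,g}\ge0$. Generalized assignment constraints: agent $i$ has sizes $s_i(g)\ge0$ and budget $B_i\ge0$; a bundle $y$ is feasible for $i$ iff $\sum_g s_i(g)y_g\le B_i$; an allocation is feasible if each $x_i$ is feasible for $i$. Agent $i$ (feasibly) envies agent $h$ in $x$ if there is a bundle $y\le x_h$ (componentwise) feasible for $i$ with $v_i(y)>v_i(x_i)$. The envy graph of $x$ is the directed graph on vertex set $[n]$ with an edge $i\to h$ iff $i$ envies $h$. *)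

theory Defs
  imports Complex_Main
begin

(* A bundle is a function
  nat => real (only goods below m matter); an allocation is a function
  nat => nat => real, where x i g is the fraction of good g given to agent i. *)

definition frac_bundle :: "nat \<Rightarrow> (nat \<Rightarrow> real) \<Rightarrow> bool" where
  "frac_bundle m y \<longleftrightarrow> (\<forall>g<m. 0 \<le> y g \<and> y g \<le> 1)"

definition allocation :: "nat \<Rightarrow> nat \<Rightarrow> (nat \<Rightarrow> nat \<Rightarrow> real) \<Rightarrow> bool" where
  "allocation n m x \<longleftrightarrow> (\<forall>i<n. frac_bundle m (x i)) \<and> (\<forall>g<m. (\<Sum>i<n. x i g) \<le> 1)"

definition val :: "nat \<Rightarrow> (nat \<Rightarrow> nat \<Rightarrow> real) \<Rightarrow> nat \<Rightarrow> (nat \<Rightarrow> real) \<Rightarrow> real" where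
  "val m v i y = (\<Sum>g<m. y g * v i g)"

definition feasible_bundle :: "nat \<Rightarrow> (nat \<Rightarrow> nat \<Rightarrow> real) \<Rightarrow> (nat \<Rightarrow> real) \<Rightarrow> nat \<Rightarrow> (nat \<Rightarrow> real) \<Rightarrow> bool" where
  "feasible_bundle m s B i y \<longleftrightarrow> (\<Sum>g<m. s i g * y g) \<le> B i"

definition feasible_allocation :: "nat \<Rightarrow> nat \<Rightarrow> (nat \<Rightarrow> nat \<Rightarrow> real) \<Rightarrow> (nat \<Rightarrow> real) \<Rightarrow> (nat \<Rightarrow> nat \<Rightarrow> real) \<Rightarrow> bool" where
  "feasible_allocation n m s B x \<longleftrightarrow> allocation n m x \<and> (\<forall>i<n. feasible_bundle m s B i (x i))"

definition envies :: "nat \<Rightarrow> (nat \<Rightarrow> nat \<Rightarrow> real) \<Rightarrow> (nat \<Rightarrow> nat \<Rightarrow> real) \<Rightarrow> (nat \<Rightarrow> real) \<Rightarrow> (nat \<Rightarrow> nat \<Rightarrow> real) \<Rightarrow> nat \<Rightarrow> nat \<Rightarrow> bool" where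
  "envies m v s B x i h \<longleftrightarrow>
     (\<exists>y. frac_bundle m y \<and> (\<forall>g<m. y g \<le> x h g) \<and> feasible_bundle m s B i y \<and> val m v i y > val m v i (x i))"

definition envy_graph :: "nat \<Rightarrow> nat \<Rightarrow> (nat \<Rightarrow> nat \<Rightarrow> real) \<Rightarrow> (nat \<Rightarrow> nat \<Rightarrow> real) \<Rightarrow> (nat \<Rightarrow> real) \<Rightarrow> (nat \<Rightarrow> nat \<Rightarrow> real) \<Rightarrow> (nat \<times> nat) set" where
  "envy_graph n m v s B x = {(i, h). i < n \<and> h < n \<and> envies m v s B x i h}"

end

theory Submission
  imports Defs
begin

text \<open>Suppose the envy graph has a cycle; a shortest one visits every agent at most once.
  Let every agent on it give up her bundle and take instead the feasible part of her
  successor's bundle that she prefers. Each good is handed out at most as much as before,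
  since along the cycle every bundle is replaced by a sub-bundle of the next one; all agents
  on the cycle gain and the others are unaffected, so the weighted welfare strictly
  increases, contradicting optimality.\<close>

lemma not_acyclic_obtains_simple_cycle:
  fixes R :: "('a \<times> 'a) set"
  assumes "\<not> acyclic R"
  obtains k p where "0 < k" "p k = p 0" "inj_on p {..<k}" "\<forall>j<k. (p j, p (Suc j)) \<in> R"
proof -
  let ?closed_walk = "\<lambda>k. 0 < k \<and> (\<exists>a. (a, a) \<in> R ^^ k)"
  have "\<exists>k. ?closed_walk k"
    using assms by (auto simp: acyclic_def trancl_power)
  then obtain k where k: "?closed_walk k" and shortest: "\<forall>k'<k. \<not> ?closed_walk k'"
    by (auto simp: exists_least_iff[of ?closed_walk])
  then obtain p where closed: "p k = p 0" and steps: "\<forall>j<k. (p j, p (Suc j)) \<in> R"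
    by (auto simp: relpow_fun_conv)
  have "p i \<noteq> p j" if "i < j" "j < k" for i j
  proof
    assume "p i = p j"
    then have "(p i, p i) \<in> R ^^ (j - i)"
      unfolding relpow_fun_conv using that steps
      by (intro exI[of _ "\<lambda>t. p (i + t)"]) auto
    moreover have "0 < j - i" "j - i < k"
      using that by auto
    ultimately show False
      using shortest by blast
  qed
  then have "inj_on p {..<k}"
    by (intro linorder_inj_onI') auto
  with k closed steps show thesis using that by blast
qed

lemma sum_closed_walk_shift:
  fixes f :: "'a \<Rightarrow> 'b::comm_monoid_add"
  assumes "p k = p 0"
  shows "(\<Sum>j<k. f (p (Suc j))) = (\<Sum>j<k. f (p j))"
proof (cases k)
  case (Suc k')
  have "(\<Sum>j<Suc k'. f (p j)) = f (p 0) + (\<Sum>j<k'. f (p (Suc j)))"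
    by (rule sum.lessThan_Suc_shift)
  then show ?thesis
    using assms Suc by (simp add: add.commute)
qed simp

lemma sum_split_inj_image:
  fixes f :: "'i \<Rightarrow> 'b::comm_monoid_add"
  assumes "finite A" "p ` {..<k} \<subseteq> A" "inj_on p {..<k}"
  shows "(\<Sum>i\<in>A. f i) = (\<Sum>j<k. f (p j)) + (\<Sum>i\<in>A - p ` {..<k}. f i)"
  using sum.subset_diff[OF assms(2,1)] assms(3) by (simp add: add.commute sum.reindex)

definition reassign_along :: "nat \<Rightarrow> (nat \<Rightarrow> 'i) \<Rightarrow> (nat \<Rightarrow> 'a) \<Rightarrow> ('i \<Rightarrow> 'a) \<Rightarrow> 'i \<Rightarrow> 'a" where
  "reassign_along k p Y x i = (if i \<in> p ` {..<k} then Y (the_inv_into {..<k} p i) else x i)"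

lemma reassign_along_preserves:
  assumes "inj_on p {..<k}" "P i (x i)" "\<And>j. j < k \<Longrightarrow> P (p j) (Y j)"
  shows "P i (reassign_along k p Y x i)"
  using assms by (cases "i \<in> p ` {..<k}") (auto simp: reassign_along_def the_inv_into_f_f)

lemma sum_reassign_along:
  fixes F :: "'i \<Rightarrow> 'a \<Rightarrow> 'b::comm_monoid_add"
  assumes "finite A" "p ` {..<k} \<subseteq> A" "inj_on p {..<k}"
  shows "(\<Sum>i\<in>A. F i (reassign_along k p Y x i))
           = (\<Sum>j<k. F (p j) (Y j)) + (\<Sum>i\<in>A - p ` {..<k}. F i (x i))"
  using sum_split_inj_image[OF assms, of "\<lambda>i. F i (reassign_along k p Y x i)"] assms(3)
  by (simp add: reassign_along_def the_inv_into_f_f)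

lemma sum_reassign_along_le:
  fixes F :: "'i \<Rightarrow> 'a \<Rightarrow> 'b::ordered_comm_monoid_add"
  assumes "finite A" "p ` {..<k} \<subseteq> A" "inj_on p {..<k}" "p k = p 0"
    and "\<And>j. j < k \<Longrightarrow> F (p j) (Y j) \<le> F (p (Suc j)) (x (p (Suc j)))"
  shows "(\<Sum>i\<in>A. F i (reassign_along k p Y x i)) \<le> (\<Sum>i\<in>A. F i (x i))"
proof -
  have "(\<Sum>j<k. F (p j) (Y j)) \<le> (\<Sum>j<k. F (p (Suc j)) (x (p (Suc j))))"
    using assms(5) by (rule sum_mono) simp
  also have "\<dots> = (\<Sum>j<k. F (p j) (x (p j)))"
    using sum_closed_walk_shift[OF assms(4), of "\<lambda>i. F i (x i)"] .
  finally show ?thesis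
    using assms(1-3) by (simp add: sum_reassign_along sum_split_inj_image[of A p k] add_right_mono)
qed

lemma sum_reassign_along_gt:
  fixes F :: "'i \<Rightarrow> 'a \<Rightarrow> 'b::ordered_cancel_comm_monoid_add"
  assumes "finite A" "p ` {..<k} \<subseteq> A" "inj_on p {..<k}" "0 < k"
    and "\<And>j. j < k \<Longrightarrow> F (p j) (x (p j)) < F (p j) (Y j)"
  shows "(\<Sum>i\<in>A. F i (x i)) < (\<Sum>i\<in>A. F i (reassign_along k p Y x i))"
proof -
  have "(\<Sum>j<k. F (p j) (x (p j))) < (\<Sum>j<k. F (p j) (Y j))"
    using assms(4,5) by (intro sum_strict_mono) auto
  then show ?thesis
    using assms(1-3) by (simp add: sum_reassign_along sum_split_inj_image[of A p k] add_strict_right_mono)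
qed

lemma feasible_allocation_reassign_along:
  assumes x: "feasible_allocation n m s B x"
    and cycle: "p ` {..<k} \<subseteq> {..<n}" "inj_on p {..<k}" "p k = p 0"
    and Y: "\<And>j. j < k \<Longrightarrow> frac_bundle m (Y j) \<and> feasible_bundle m s B (p j) (Y j)"
    and Y_sub: "\<And>j g. j < k \<Longrightarrow> g < m \<Longrightarrow> Y j g \<le> x (p (Suc j)) g"
  shows "feasible_allocation n m s B (reassign_along k p Y x)"
  unfolding feasible_allocation_def allocation_def
proof (intro conjI allI impI)
  fix i
  assume "i < n"
  with x have "frac_bundle m (x i)" "feasible_bundle m s B i (x i)"
    by (auto simp: feasible_allocation_def allocation_def)
  then show "frac_bundle m (reassign_along k p Y x i)"
    and "feasible_bundle m s B i (reassign_along k p Y x i)"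
    using cycle(2) Y
    by (auto intro: reassign_along_preserves[where P = "\<lambda>_. frac_bundle m"]
                    reassign_along_preserves[where P = "feasible_bundle m s B"])
next
  fix g
  assume "g < m"
  have "(\<Sum>i<n. reassign_along k p Y x i g) \<le> (\<Sum>i<n. x i g)"
    using cycle Y_sub[OF _ \<open>g < m\<close>]
    by (intro sum_reassign_along_le[where F = "\<lambda>_ y. y g"]) auto
  also have "\<dots> \<le> 1"
    using x \<open>g < m\<close> by (simp add: feasible_allocation_def allocation_def)
  finally show "(\<Sum>i<n. reassign_along k p Y x i g) \<le> 1" .
qed

lemma envy_cycle_improves_welfare:
  assumes x: "feasible_allocation n m s B x"
    and w_pos: "\<forall>i<n. 0 < w i"
    and cycle: "0 < k" "p k = p 0" "inj_on p {..<k}"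
    and envy: "\<forall>j<k. (p j, p (Suc j)) \<in> envy_graph n m v s B x"
  obtains x' where "feasible_allocation n m s B x'"
    and "(\<Sum>i<n. w i * val m v i (x i)) < (\<Sum>i<n. w i * val m v i (x' i))"
proof -
  have agents: "p ` {..<k} \<subseteq> {..<n}"
    using envy by (auto simp: envy_graph_def)
  from envy obtain Y where Y: "\<forall>j<k. frac_bundle m (Y j) \<and> (\<forall>g<m. Y j g \<le> x (p (Suc j)) g)
      \<and> feasible_bundle m s B (p j) (Y j) \<and> val m v (p j) (x (p j)) < val m v (p j) (Y j)"
    unfolding envy_graph_def envies_def by simp metis
  let ?x' = "reassign_along k p Y x"
  have "feasible_allocation n m s B ?x'"
    using x agents cycle Y by (intro feasible_allocation_reassign_along) auto
  moreover have "(\<Sum>i<n. w i * val m v i (x i)) < (\<Sum>i<n. w i * val m v i (?x' i))"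
    using agents cycle Y w_pos
    by (intro sum_reassign_along_gt[where F = "\<lambda>i y. w i * val m v i y"]) auto
  ultimately show thesis
    using that by blast
qed

theorem lemma2:
  fixes n m :: nat
    and v s :: "nat \<Rightarrow> nat \<Rightarrow> real"
    and B w :: "nat \<Rightarrow> real"
    and x :: "nat \<Rightarrow> nat \<Rightarrow> real"
  assumes v_nonneg: "\<forall>i<n. \<forall>g<m. 0 \<le> v i g"
    and s_nonneg: "\<forall>i<n. \<forall>g<m. 0 \<le> s i g"
    and B_nonneg: "\<forall>i<n. 0 \<le> B i"
    and w_pos: "\<forall>i<n. 0 < w i"
    and x_feas: "feasible_allocation n m s B x"
    and x_opt: "\<forall>x'. feasible_allocation n m s B x' \<longrightarrow>
                  (\<Sum>i<n. w i * val m v i (x' i)) \<le> (\<Sum>i<n. w i * val m v i (x i))"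
  shows "acyclic (envy_graph n m v s B x)"
proof (rule ccontr)
  assume "\<not> acyclic (envy_graph n m v s B x)"
  then obtain k p where "0 < k" "p k = p 0" "inj_on p {..<k}"
    and "\<forall>j<k. (p j, p (Suc j)) \<in> envy_graph n m v s B x"
    by (rule not_acyclic_obtains_simple_cycle)
  with x_feas w_pos obtain x' where "feasible_allocation n m s B x'"
    and "(\<Sum>i<n. w i * val m v i (x i)) < (\<Sum>i<n. w i * val m v i (x' i))"
    by (rule envy_cycle_improves_welfare)
  with x_opt show False
    by (meson not_le)
qed

end
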